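(* Let $(G,X,\alpha)$ be a $G$-Tychonoff space and let $\mathcal U$ be the maximal equiuniformity on $X$ for $(G,X,\alpha)$. If $(H,X,\gamma)$ is a $G$-space, $(\varphi,\mathrm{id}):(G,X,\alpha)\to(H,X,\gamma)$ is an equivariant pair of maps, and $\mathcal U$ is an equiuniformity on $X$ for $(H,X,\gamma)$, then $\mathcal U$ is the maximal equiuniformity on $X$ for $(H,X,\gamma)$.
   Context: All spaces are Tychonoff and all maps continuous. A $G$-space $(G,X,\alpha)$ is a topological group $G$ with a continuous action $\alpha:G\times X\to X$. An equivariant pair of maps $(\varphi,\mathrm{id}):(G,X,\alpha)\to(H,X,\gamma)$ consists of a continuous homomorphism $\varphi:G\to H$ with $\alpha(g,x)=\gamma(\varphi(g),x)$ for all $g\in G,x\in X$. Uniformities are given by families of open covers. A uniformity $\mathcal U$ is an equiuniformity for $(G,X,\alpha)$ if it is saturated ($gu\in\mathcal U$ for $u\in\mathcal U$, $g\in G$) and bounded (for each $u\in\mathcal U$ there exist an open neighborhood $O$ of the unit in $G$ and $v\in\mathcal U$ with $\{OV:V\in v\}$ refining $u$). $(G,X,\alpha)$ is $G$-Tychonoff if it admits an equivariant compactification (a compactification $bX$ with a continuous $G$-action extending $\alpha$). The maximal equiuniformity is the finest equiuniformity on $X$. *)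

theory Defs
  imports "HOL-Analysis.Analysis" "HOL-Algebra.Group"
begin

definition tychonoff_space :: "'a topology \<Rightarrow> bool" where
  "tychonoff_space X \<longleftrightarrow> completely_regular_space X \<and> Hausdorff_space X"

definition topological_group :: "('g, 'm) monoid_scheme \<Rightarrow> 'g topology \<Rightarrow> bool" where
  "topological_group G TG \<longleftrightarrow>
     group G \<and> topspace TG = carrier G \<and> tychonoff_space TG \<and>
     continuous_map (prod_topology TG TG) TG (\<lambda>p. fst p \<otimes>\<^bsub>G\<^esub> snd p) \<and>
     continuous_map TG TG (\<lambda>g. inv\<^bsub>G\<^esub> g)"

definition G_space ::
  "('g, 'm) monoid_scheme \<Rightarrow> 'g topology \<Rightarrow> 'x topology \<Rightarrow> ('g \<Rightarrow> 'x \<Rightarrow> 'x) \<Rightarrow> bool" where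
  "G_space G TG X \<alpha> \<longleftrightarrow>
     topological_group G TG \<and> tychonoff_space X \<and>
     continuous_map (prod_topology TG X) X (\<lambda>p. \<alpha> (fst p) (snd p)) \<and>
     (\<forall>x\<in>topspace X. \<alpha> \<one>\<^bsub>G\<^esub> x = x) \<and>
     (\<forall>g\<in>carrier G. \<forall>h\<in>carrier G. \<forall>x\<in>topspace X. \<alpha> (g \<otimes>\<^bsub>G\<^esub> h) x = \<alpha> g (\<alpha> h x))"

definition equivariant_pair ::
  "('g, 'm) monoid_scheme \<Rightarrow> 'g topology \<Rightarrow> ('h, 'n) monoid_scheme \<Rightarrow> 'h topology \<Rightarrow>
   'x topology \<Rightarrow> ('g \<Rightarrow> 'x \<Rightarrow> 'x) \<Rightarrow> ('h \<Rightarrow> 'x \<Rightarrow> 'x) \<Rightarrow> ('g \<Rightarrow> 'h) \<Rightarrow> bool" where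
  "equivariant_pair G TG H TH X \<alpha> \<gamma> \<phi> \<longleftrightarrow>
     \<phi> \<in> hom G H \<and> continuous_map TG TH \<phi> \<and>
     (\<forall>g\<in>carrier G. \<forall>x\<in>topspace X. \<alpha> g x = \<gamma> (\<phi> g) x)"

definition equivariant_compactification ::
  "('g, 'm) monoid_scheme \<Rightarrow> 'g topology \<Rightarrow> 'x topology \<Rightarrow> ('g \<Rightarrow> 'x \<Rightarrow> 'x) \<Rightarrow>
   'b topology \<Rightarrow> ('x \<Rightarrow> 'b) \<Rightarrow> ('g \<Rightarrow> 'b \<Rightarrow> 'b) \<Rightarrow> bool" where
  "equivariant_compactification G TG X \<alpha> bX e \<beta> \<longleftrightarrow>
     compact_space bX \<and> Hausdorff_space bX \<and>
     embedding_map X bX e \<and> bX closure_of (e ` topspace X) = topspace bX \<and>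
     G_space G TG bX \<beta> \<and>
     (\<forall>g\<in>carrier G. \<forall>x\<in>topspace X. \<beta> g (e x) = e (\<alpha> g x))"

definition open_cover :: "'x topology \<Rightarrow> 'x set set \<Rightarrow> bool" where
  "open_cover X u \<longleftrightarrow> (\<forall>U\<in>u. openin X U) \<and> \<Union>u = topspace X"

definition refines :: "'x set set \<Rightarrow> 'x set set \<Rightarrow> bool" where
  "refines v u \<longleftrightarrow> (\<forall>V\<in>v. \<exists>U\<in>u. V \<subseteq> U)"

definition star_of :: "'x set \<Rightarrow> 'x set set \<Rightarrow> 'x set" where
  "star_of A u = \<Union>{U\<in>u. U \<inter> A \<noteq> {}}"

definition star_refines :: "'x set set \<Rightarrow> 'x set set \<Rightarrow> bool" where
  "star_refines v u \<longleftrightarrow> (\<forall>V\<in>v. \<exists>U\<in>u. star_of V v \<subseteq> U)"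

text \<open>A uniformity on X given by a family of open covers (covering uniformity in the
  sense of Tukey), compatible with the topology of X.\<close>
definition uniformity_on :: "'x topology \<Rightarrow> 'x set set set \<Rightarrow> bool" where
  "uniformity_on X \<U> \<longleftrightarrow>
     \<U> \<noteq> {} \<and>
     (\<forall>u\<in>\<U>. open_cover X u) \<and>
     (\<forall>u\<in>\<U>. \<forall>v. open_cover X v \<and> refines u v \<longrightarrow> v \<in> \<U>) \<and>
     (\<forall>u\<in>\<U>. \<forall>v\<in>\<U>. \<exists>w\<in>\<U>. refines w u \<and> refines w v) \<and>
     (\<forall>u\<in>\<U>. \<exists>v\<in>\<U>. star_refines v u) \<and>
     (\<forall>W x. openin X W \<and> x \<in> W \<longrightarrow> (\<exists>u\<in>\<U>. star_of {x} u \<subseteq> W))"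

definition equiuniformity ::
  "('g, 'm) monoid_scheme \<Rightarrow> 'g topology \<Rightarrow> 'x topology \<Rightarrow> ('g \<Rightarrow> 'x \<Rightarrow> 'x) \<Rightarrow>
   'x set set set \<Rightarrow> bool" where
  "equiuniformity G TG X \<alpha> \<U> \<longleftrightarrow>
     uniformity_on X \<U> \<and>
     (\<forall>u\<in>\<U>. \<forall>g\<in>carrier G. (\<lambda>U. \<alpha> g ` U) ` u \<in> \<U>) \<and>
     (\<forall>u\<in>\<U>. \<exists>N v. openin TG N \<and> \<one>\<^bsub>G\<^esub> \<in> N \<and> v \<in> \<U> \<and>
        refines ((\<lambda>V. {\<alpha> g y | g y. g \<in> N \<and> y \<in> V}) ` v) u)"

definition maximal_equiuniformity ::
  "('g, 'm) monoid_scheme \<Rightarrow> 'g topology \<Rightarrow> 'x topology \<Rightarrow> ('g \<Rightarrow> 'x \<Rightarrow> 'x) \<Rightarrow>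
   'x set set set \<Rightarrow> bool" where
  "maximal_equiuniformity G TG X \<alpha> \<U> \<longleftrightarrow>
     equiuniformity G TG X \<alpha> \<U> \<and>
     (\<forall>\<V>. equiuniformity G TG X \<alpha> \<V> \<longrightarrow> \<V> \<subseteq> \<U>)"

end

theory Submission
  imports Defs
begin

text \<open>Every equiuniformity for (H, X, gamma) is one for (G, X, alpha): translates by g are
  translates by phi g, and the phi-preimage of an H-neighbourhood of the unit is a
  G-neighbourhood of the unit with smaller translates. So the H-equiuniformities form a
  subfamily of the G-equiuniformities, and the finest member of the larger family, lying
  in the smaller one, is also finest there. The equivariant compactification only
  guarantees that the maximal equiuniformity exists; the argument does not use it.\<close>

lemma uniformity_on_cover_subset:
  assumes "uniformity_on X \<V>" "u \<in> \<V>" "U \<in> u"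
  shows "U \<subseteq> topspace X"
  using assms unfolding uniformity_on_def open_cover_def by (meson openin_subset)

lemma equivariant_pair_translate_cover:
  assumes "equivariant_pair G TG H TH X \<alpha> \<gamma> \<phi>" "uniformity_on X \<V>" "u \<in> \<V>"
    and "g \<in> carrier G"
  shows "(\<lambda>U. \<alpha> g ` U) ` u = (\<lambda>U. \<gamma> (\<phi> g) ` U) ` u"
proof (rule image_cong[OF refl])
  fix U assume "U \<in> u"
  then have "U \<subseteq> topspace X"
    using uniformity_on_cover_subset[OF assms(2,3)] by blast
  then show "\<alpha> g ` U = \<gamma> (\<phi> g) ` U"
    using assms(1,4) unfolding equivariant_pair_def by (auto intro!: image_cong)
qed

lemma equivariant_pair_translate_preimage:
  assumes "equivariant_pair G TG H TH X \<alpha> \<gamma> \<phi>" "topspace TG = carrier G"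
    and "V \<subseteq> topspace X"
  shows "{\<alpha> g y | g y. g \<in> {x \<in> topspace TG. \<phi> x \<in> N} \<and> y \<in> V}
           \<subseteq> {\<gamma> h y | h y. h \<in> N \<and> y \<in> V}"
  using assms unfolding equivariant_pair_def by blast

lemma equiuniformity_pullback:
  assumes G: "topological_group G TG" and H: "topological_group H TH"
    and \<phi>: "equivariant_pair G TG H TH X \<alpha> \<gamma> \<phi>"
    and \<V>: "equiuniformity H TH X \<gamma> \<V>"
  shows "equiuniformity G TG X \<alpha> \<V>"
proof -
  have uniform: "uniformity_on X \<V>"
    using \<V> unfolding equiuniformity_def by blast
  have hom: "\<phi> \<in> hom G H" and cont: "continuous_map TG TH \<phi>"
    using \<phi> unfolding equivariant_pair_def by auto
  have tG: "topspace TG = carrier G"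
    using G unfolding topological_group_def by blast
  have \<phi>_one: "\<phi> \<one>\<^bsub>G\<^esub> = \<one>\<^bsub>H\<^esub>"
    using G H hom unfolding topological_group_def
    by (simp add: group_hom.hom_one group_hom_axioms_def group_hom_def)
  have saturated: "(\<lambda>U. \<alpha> g ` U) ` u \<in> \<V>" if "u \<in> \<V>" "g \<in> carrier G" for u g
  proof -
    have "\<phi> g \<in> carrier H" using hom that(2) by (auto simp: hom_def)
    then show ?thesis
      using \<V> that equivariant_pair_translate_cover[OF \<phi> uniform that]
      unfolding equiuniformity_def by auto
  qed
  have bounded: "\<exists>M v. openin TG M \<and> \<one>\<^bsub>G\<^esub> \<in> M \<and> v \<in> \<V> \<and>
      refines ((\<lambda>V. {\<alpha> g y | g y. g \<in> M \<and> y \<in> V}) ` v) u" if u: "u \<in> \<V>" for u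
  proof -
    obtain N v where N: "openin TH N" "\<one>\<^bsub>H\<^esub> \<in> N" and v: "v \<in> \<V>"
      and refines_u: "refines ((\<lambda>V. {\<gamma> h y | h y. h \<in> N \<and> y \<in> V}) ` v) u"
      using \<V> u unfolding equiuniformity_def by blast
    define M where "M = {x \<in> topspace TG. \<phi> x \<in> N}"
    have "openin TG M"
      unfolding M_def using cont N(1) by (rule openin_continuous_map_preimage)
    moreover have "\<one>\<^bsub>G\<^esub> \<in> M"
    proof -
      have "\<one>\<^bsub>G\<^esub> \<in> carrier G"
        using G unfolding topological_group_def by (blast intro: group.is_monoid monoid.one_closed)
      then show ?thesis using tG \<phi>_one N(2) unfolding M_def by simp
    qed
    moreover have "refines ((\<lambda>V. {\<alpha> g y | g y. g \<in> M \<and> y \<in> V}) ` v) u"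
      unfolding refines_def
    proof
      fix W assume "W \<in> (\<lambda>V. {\<alpha> g y | g y. g \<in> M \<and> y \<in> V}) ` v"
      then obtain V where V: "V \<in> v" and W: "W = {\<alpha> g y | g y. g \<in> M \<and> y \<in> V}"
        by blast
      obtain U where U: "U \<in> u" "{\<gamma> h y | h y. h \<in> N \<and> y \<in> V} \<subseteq> U"
        using refines_u V unfolding refines_def by blast
      have "W \<subseteq> {\<gamma> h y | h y. h \<in> N \<and> y \<in> V}"
        unfolding W M_def
        by (rule equivariant_pair_translate_preimage
            [OF \<phi> tG uniformity_on_cover_subset[OF uniform v V]])
      with U show "\<exists>U\<in>u. W \<subseteq> U" by (meson order_trans)
    qed
    ultimately show ?thesis using v by blast
  qed
  show ?thesis
    unfolding equiuniformity_def using uniform saturated bounded by blast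
qed

theorem corollary2p13:
  fixes G :: "('g, 'm) monoid_scheme" and TG :: "'g topology"
    and H :: "('h, 'n) monoid_scheme" and TH :: "'h topology"
    and X :: "'x topology" and \<alpha> :: "'g \<Rightarrow> 'x \<Rightarrow> 'x" and \<gamma> :: "'h \<Rightarrow> 'x \<Rightarrow> 'x"
    and \<phi> :: "'g \<Rightarrow> 'h" and \<U> :: "'x set set set"
    and bX :: "'b topology" and e :: "'x \<Rightarrow> 'b" and \<beta> :: "'g \<Rightarrow> 'b \<Rightarrow> 'b"
  assumes "G_space G TG X \<alpha>"
    and "equivariant_compactification G TG X \<alpha> bX e \<beta>"
    and "maximal_equiuniformity G TG X \<alpha> \<U>"
    and "G_space H TH X \<gamma>"
    and "equivariant_pair G TG H TH X \<alpha> \<gamma> \<phi>"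
    and "equiuniformity H TH X \<gamma> \<U>"
  shows "maximal_equiuniformity H TH X \<gamma> \<U>"
proof -
  have "topological_group G TG" "topological_group H TH"
    using assms(1,4) unfolding G_space_def by blast+
  then have "equiuniformity G TG X \<alpha> \<V>" if "equiuniformity H TH X \<gamma> \<V>" for \<V>
    using equiuniformity_pullback assms(5) that by blast
  then show ?thesis
    using assms(3,6) unfolding maximal_equiuniformity_def by blast
qed

end
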